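(* Let $\mathcal{D}$ be an even domain and $a,b>0$, $c\ge\max\{a,b\}$, and let $c_b,c_b'\in[0,\infty]$ with $c_b\le c_b'$. Then \[\mathsf{HF}_{\mathcal{D}\setminus\partial_V\mathcal{D},a,b,c}^{-1,0}\preceq \mathsf{HF}_{\mathcal{D},a,b,c}^{0,1;c_b}\preceq \mathsf{HF}_{\mathcal{D},a,b,c}^{0,1;c_b'}\preceq \mathsf{HF}_{\mathcal{D}\setminus\partial_V\mathcal{D},a,b,c}^{0,1},\] where $\preceq$ denotes stochastic domination with respect to the pointwise order on height functions.
   Context: Faces of $\mathbb{Z}^2$ are centered at integer points; the face $(i,j)$ is even if $i+j$ is even, odd otherwise. A domain is a finite subgraph $\mathcal{D}$ of $\mathbb{Z}^2$ consisting of a simple cycle $\partial\mathcal{D}$ together with everything it encloses; its faces are the enclosed faces. $\partial_{\mathrm{ext}}\mathcal{D}$ is the set of faces not in $\mathcal{D}$ sharing an edge with a face of $\mathcal{D}$; $\mathcal{D}$ is even if all faces of $\partial_{\mathrm{ext}}\mathcal{D}$ are even. $\partial_V\mathcal{D}$ is the set of vertices of $\mathcal{D}$ belonging to exactly one face of $\mathcal{D}$. A height function is $h\colon F(\mathbb{Z}^2)\to\mathbb{Z}$ with $|h(u)-h(v)|=1$ across edges and $h(u)$ of the parity of $u$. Around a vertex the four faces form two diagonal pairs (south-west/north-east and north-west/south-east); the vertex is of type $c$ if both pairs have equal heights, of type $a$ if only the south-west/north-east pair does, of type $b$ if only the north-west/south-east pair does. For $n\in\mathbb{Z}$ the boundary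 condition "$n,n+1$" is the function equal to $n$ on faces of the parity of $n$ and $n+1$ on the others. For $c_b\in(0,\infty)$, $\mathsf{HF}_{\mathcal{D},a,b,c}^{0,1;c_b}$ is the probability measure on height functions equal to the $0,1$ boundary condition off the faces of $\mathcal{D}$, with probability proportional to $a^{N_a'}b^{N_b'}c^{N_c'}c_b^{N_{\partial}}$, where $N_x'$ counts vertices of $\mathcal{D}\setminus\partial_V\mathcal{D}$ of type $x$ and $N_\partial$ counts vertices of $\partial_V\mathcal{D}$ of type $c$; for $c_b\in\{0,\infty\}$ it is the weak limit as $c_b\to0$ or $c_b\to\infty$. For $t$ equal to the $-1,0$ or the $0,1$ boundary condition, $\mathsf{HF}_{\mathcal{D}\setminus\partial_V\mathcal{D},a,b,c}^{t}$ denotes the height-function measure on the graph $\mathcal{D}\setminus\partial_V\mathcal{D}$ obtained from $\mathcal{D}$ by removing the vertices of $\partial_V\mathcal{D}$ and their incident edges: it is supported on height functions equal to $t$ on all faces that are not faces of $\mathcal{D}$ or that contain a vertex of $\partial_V\mathcal{D}$, with probability proportional to $a^{N_a'}b^{N_b'}c^{N_c'}$. *)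

theory Defs
  imports Complex_Main "HOL-Library.Extended_Real"
begin

text \<open>Faces of Z^2 are indexed by their centres (i,j) :: int \<times> int.
  A vertex (x,y) :: int \<times> int denotes the lattice corner at the point (x+1/2, y+1/2);
  its four surrounding faces are SW=(x,y), SE=(x+1,y), NW=(x,y+1), NE=(x+1,y+1).\<close>

type_synonym face = "int \<times> int"
type_synonym vertex = "int \<times> int"
type_synonym hfun = "face \<Rightarrow> int"

definition adj_face :: "face \<Rightarrow> face \<Rightarrow> bool" where
  "adj_face u w \<longleftrightarrow> \<bar>fst u - fst w\<bar> + \<bar>snd u - snd w\<bar> = 1"

definition adj_vertex :: "vertex \<Rightarrow> vertex \<Rightarrow> bool" where
  "adj_vertex v w \<longleftrightarrow> \<bar>fst v - fst w\<bar> + \<bar>snd v - snd w\<bar> = 1"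

definition even_face :: "face \<Rightarrow> bool" where
  "even_face u \<longleftrightarrow> even (fst u + snd u)"

definition faces_at :: "vertex \<Rightarrow> face set" where
  "faces_at v = {(fst v, snd v), (fst v + 1, snd v), (fst v, snd v + 1), (fst v + 1, snd v + 1)}"

definition simple_cycle :: "vertex list \<Rightarrow> bool" where
  "simple_cycle cs \<longleftrightarrow> length cs \<ge> 3 \<and> distinct cs \<and>
     (\<forall>k < length cs. adj_vertex (cs ! k) (cs ! ((k + 1) mod length cs)))"

text \<open>A face is enclosed by the cycle iff the vertical ray going upwards from its
  centre crosses an odd number of (horizontal) edges of the cycle.\<close>
definition crossings :: "vertex list \<Rightarrow> face \<Rightarrow> nat" where
  "crossings cs u = card {k. k < length cs \<and>
     (\<exists>y \<ge> snd u. {cs ! k, cs ! ((k + 1) mod length cs)} = {(fst u - 1, y), (fst u, y)})}"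

definition enclosed_faces :: "vertex list \<Rightarrow> face set" where
  "enclosed_faces cs = {u. odd (crossings cs u)}"

definition is_domain :: "face set \<Rightarrow> bool" where
  "is_domain D \<longleftrightarrow> (\<exists>cs. simple_cycle cs \<and> D = enclosed_faces cs)"

definition dom_vertices :: "face set \<Rightarrow> vertex set" where
  "dom_vertices D = {v. faces_at v \<inter> D \<noteq> {}}"

definition bdryV :: "face set \<Rightarrow> vertex set" where
  "bdryV D = {v. card (faces_at v \<inter> D) = 1}"

definition ext_bdry :: "face set \<Rightarrow> face set" where
  "ext_bdry D = {u. u \<notin> D \<and> (\<exists>w\<in>D. adj_face u w)}"

definition even_domain :: "face set \<Rightarrow> bool" where
  "even_domain D \<longleftrightarrow> is_domain D \<and> (\<forall>u\<in>ext_bdry D. even_face u)"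

definition height_function :: "hfun \<Rightarrow> bool" where
  "height_function h \<longleftrightarrow> (\<forall>u w. adj_face u w \<longrightarrow> \<bar>h u - h w\<bar> = 1) \<and>
     (\<forall>u. even (h u) \<longleftrightarrow> even_face u)"

definition SW :: "vertex \<Rightarrow> face" where "SW v = (fst v, snd v)"
definition SE :: "vertex \<Rightarrow> face" where "SE v = (fst v + 1, snd v)"
definition NW :: "vertex \<Rightarrow> face" where "NW v = (fst v, snd v + 1)"
definition NE :: "vertex \<Rightarrow> face" where "NE v = (fst v + 1, snd v + 1)"

definition type_c :: "hfun \<Rightarrow> vertex \<Rightarrow> bool" where
  "type_c h v \<longleftrightarrow> h (SW v) = h (NE v) \<and> h (NW v) = h (SE v)"
definition type_a :: "hfun \<Rightarrow> vertex \<Rightarrow> bool" where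
  "type_a h v \<longleftrightarrow> h (SW v) = h (NE v) \<and> h (NW v) \<noteq> h (SE v)"
definition type_b :: "hfun \<Rightarrow> vertex \<Rightarrow> bool" where
  "type_b h v \<longleftrightarrow> h (SW v) \<noteq> h (NE v) \<and> h (NW v) = h (SE v)"

definition vweight :: "real \<Rightarrow> real \<Rightarrow> real \<Rightarrow> hfun \<Rightarrow> vertex \<Rightarrow> real" where
  "vweight a b c h v = (if type_c h v then c else if type_a h v then a
                        else if type_b h v then b else 1)"

definition bc :: "int \<Rightarrow> hfun" where
  "bc n u = (if even_face u = even n then n else n + 1)"

text \<open>The measure HF_{D,a,b,c}^{0,1;cb} for finite cb > 0, as a function on events.\<close>
definition Omega_D :: "face set \<Rightarrow> hfun set" where
  "Omega_D D = {h. height_function h \<and> (\<forall>u. u \<notin> D \<longrightarrow> h u = bc 0 u)}"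

definition weight_D :: "real \<Rightarrow> real \<Rightarrow> real \<Rightarrow> real \<Rightarrow> face set \<Rightarrow> hfun \<Rightarrow> real" where
  "weight_D a b c cb D h =
     (\<Prod>v \<in> dom_vertices D - bdryV D. vweight a b c h v) *
     (\<Prod>v \<in> bdryV D. if type_c h v then cb else 1)"

definition prob_D :: "real \<Rightarrow> real \<Rightarrow> real \<Rightarrow> real \<Rightarrow> face set \<Rightarrow> hfun set \<Rightarrow> real" where
  "prob_D a b c cb D A =
     (\<Sum>h \<in> Omega_D D \<inter> A. weight_D a b c cb D h) / (\<Sum>h \<in> Omega_D D. weight_D a b c cb D h)"

text \<open>For cb in [0,\<infinity>]: the weak limits at 0 and \<infinity> (on a finite state space, weak
  convergence is convergence of the probability of every event).\<close>
definition HF_D :: "real \<Rightarrow> real \<Rightarrow> real \<Rightarrow> ereal \<Rightarrow> face set \<Rightarrow> hfun set \<Rightarrow> real" where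
  "HF_D a b c cb D A =
     (if cb = 0 then Lim (at_right 0) (\<lambda>x. prob_D a b c x D A)
      else if cb = \<infinity> then Lim at_top (\<lambda>x. prob_D a b c x D A)
      else prob_D a b c (real_of_ereal cb) D A)"

text \<open>The measure HF^t on the graph D minus the vertices of bdryV D.\<close>
definition Omega_R :: "hfun \<Rightarrow> face set \<Rightarrow> hfun set" where
  "Omega_R t D = {h. height_function h \<and>
     (\<forall>u. (u \<notin> D \<or> (\<exists>v \<in> bdryV D. u \<in> faces_at v)) \<longrightarrow> h u = t u)}"

definition weight_R :: "real \<Rightarrow> real \<Rightarrow> real \<Rightarrow> face set \<Rightarrow> hfun \<Rightarrow> real" where
  "weight_R a b c D h = (\<Prod>v \<in> dom_vertices D - bdryV D. vweight a b c h v)"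

definition HF_R :: "real \<Rightarrow> real \<Rightarrow> real \<Rightarrow> hfun \<Rightarrow> face set \<Rightarrow> hfun set \<Rightarrow> real" where
  "HF_R a b c t D A =
     (\<Sum>h \<in> Omega_R t D \<inter> A. weight_R a b c D h) / (\<Sum>h \<in> Omega_R t D. weight_R a b c D h)"

definition increasing_event :: "hfun set \<Rightarrow> bool" where
  "increasing_event A \<longleftrightarrow> (\<forall>h h'. h \<in> A \<and> (\<forall>u. h u \<le> h' u) \<longrightarrow> h' \<in> A)"

definition stoch_dom :: "(hfun set \<Rightarrow> real) \<Rightarrow> (hfun set \<Rightarrow> real) \<Rightarrow> bool" where
  "stoch_dom P Q \<longleftrightarrow> (\<forall>A. increasing_event A \<longrightarrow> P A \<le> Q A)"

end

theory Submission
  imports Defs "HOL-Library.FuncSet"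
begin

(*
  For 0 < x the measure prob_D x lives on the height functions on D, a finite set closed under
  pointwise min and max, and its weight satisfies Holley's lattice condition against the weight at
  any y >= x. At an inner vertex, vweight = (ab/c) (c/b)^[h SW = h NE] (c/a)^[h NW = h SE] with
  c/a, c/b >= 1, and a diagonal agreement of h or h' survives in min h h' or in max h h'. At a
  boundary vertex the unique face in D is odd with height +-1, and the vertex is of type c iff this
  height is 1. Holley's inequality, a consequence of the Ahlswede-Daykin four functions theorem,
  makes prob_D x increasing in x.
  The weight is weight_R times x^N, N the number of boundary vertices of type c. As x tends to
  infinity the measure conditions on N being maximal, which gives the measure with boundary
  condition 0,1; as x tends to 0 it conditions on N = 0, and this conditioned measure is the image
  of the measure with boundary condition -1,0 under the increasing, weight-preserving map that
  resets the heights outside D to 0,1.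
*)

section \<open>Four functions theorem and Holley inequality\<close>

lemma four_functions_two_point:
  fixes a0 a1 b0 b1 c0 c1 d0 d1 :: real
  assumes nn: "0 \<le> a0" "0 \<le> a1" "0 \<le> b0" "0 \<le> b1" "0 \<le> c0" "0 \<le> c1" "0 \<le> d0" "0 \<le> d1"
    and h00: "a0 * b0 \<le> c0 * d0" and h01: "a0 * b1 \<le> c0 * d1"
    and h10: "a1 * b0 \<le> c0 * d1" and h11: "a1 * b1 \<le> c1 * d1"
  shows "(a0 + a1) * (b0 + b1) \<le> (c0 + c1) * (d0 + d1)"
proof (cases "c0 * d1 = 0")
  case True
  then have "a0 * b1 = 0" "a1 * b0 = 0"
    using h01 h10 mult_nonneg_nonneg[OF nn(1) nn(4)] mult_nonneg_nonneg[OF nn(2) nn(3)] by linarith+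
  moreover have "0 \<le> c1 * d0" using nn by simp
  moreover have "(a0 + a1) * (b0 + b1) = a0 * b0 + a1 * b1 + a0 * b1 + a1 * b0"
    "(c0 + c1) * (d0 + d1) = c0 * d0 + c1 * d1 + c0 * d1 + c1 * d0" by (simp_all add: algebra_simps)
  ultimately show ?thesis using h00 h11 True by linarith
next
  case False
  define w u v where "w = c0 * d1" and "u = a0 * b1" and "v = a1 * b0"
  have "0 < w" using False nn unfolding w_def by (simp add: less_le)
  have "u * v = (a0 * b0) * (a1 * b1)" by (simp add: u_def v_def algebra_simps)
  also have "\<dots> \<le> (c0 * d0) * (c1 * d1)" by (rule mult_mono[OF h00 h11]) (use nn in simp_all)
  also have "\<dots> = w * (c1 * d0)" by (simp add: w_def algebra_simps)
  finally have uv: "u * v \<le> w * (c1 * d0)" .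
  \<comment> \<open>\<open>u, v \<le> w\<close> gives \<open>(w - u) (w - v) \<ge> 0\<close>, i.e. \<open>w (u + v) \<le> w^2 + u v\<close>.\<close>
  have "0 \<le> (w - u) * (w - v)" using nn h01 h10 by (simp add: u_def v_def w_def)
  then have "w * (u + v) \<le> w * (w + c1 * d0)" using uv by (simp add: algebra_simps)
  then have "u + v \<le> w + c1 * d0" using \<open>0 < w\<close> by simp
  then show ?thesis using h00 h11 unfolding u_def v_def w_def by (simp add: algebra_simps)
qed

lemma sum_Pow_insert:
  assumes "finite I" "i \<notin> I"
  shows "sum f (Pow (insert i I)) = (\<Sum>X\<in>Pow I. f X + f (insert i X))"
proof -
  have inj: "inj_on (insert i) (Pow I)"
    using assms(2) unfolding inj_on_def by (metis PowD in_mono insert_ident)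
  have "sum f (Pow (insert i I)) = sum f (Pow I) + sum f (insert i ` Pow I)"
    unfolding Pow_insert using assms by (intro sum.union_disjoint) auto
  also have "sum f (insert i ` Pow I) = (\<Sum>X\<in>Pow I. f (insert i X))"
    using sum.reindex[OF inj] by simp
  finally show ?thesis by (simp add: sum.distrib)
qed

theorem four_functions:
  fixes \<alpha> \<beta> \<gamma> \<delta> :: "'a set \<Rightarrow> real"
  assumes "finite I"
    and "\<And>X. X \<subseteq> I \<Longrightarrow> 0 \<le> \<alpha> X" "\<And>X. X \<subseteq> I \<Longrightarrow> 0 \<le> \<beta> X"
    "\<And>X. X \<subseteq> I \<Longrightarrow> 0 \<le> \<gamma> X" "\<And>X. X \<subseteq> I \<Longrightarrow> 0 \<le> \<delta> X"
    and "\<And>X Y. X \<subseteq> I \<Longrightarrow> Y \<subseteq> I \<Longrightarrow> \<alpha> X * \<beta> Y \<le> \<gamma> (X \<inter> Y) * \<delta> (X \<union> Y)"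
  shows "sum \<alpha> (Pow I) * sum \<beta> (Pow I) \<le> sum \<gamma> (Pow I) * sum \<delta> (Pow I)"
  using assms
proof (induction I arbitrary: \<alpha> \<beta> \<gamma> \<delta> rule: finite_induct)
  case empty
  then show ?case by auto
next
  case (insert i I)
  let ?a = "\<lambda>X. \<alpha> X + \<alpha> (insert i X)"
  let ?b = "\<lambda>X. \<beta> X + \<beta> (insert i X)"
  let ?c = "\<lambda>X. \<gamma> X + \<gamma> (insert i X)"
  let ?d = "\<lambda>X. \<delta> X + \<delta> (insert i X)"
  have "sum ?a (Pow I) * sum ?b (Pow I) \<le> sum ?c (Pow I) * sum ?d (Pow I)"
  proof (rule insert.IH)
    fix X assume "X \<subseteq> I"
    then have "insert i X \<subseteq> insert i I" "X \<subseteq> insert i I" by auto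
    then show "0 \<le> ?a X" "0 \<le> ?b X" "0 \<le> ?c X" "0 \<le> ?d X"
      using insert.prems(1-4) by (simp_all add: add_nonneg_nonneg)
  next
    fix X Y assume X: "X \<subseteq> I" and Y: "Y \<subseteq> I"
    have "i \<notin> X" "i \<notin> Y" using X Y insert.hyps by auto
    then have "X \<inter> insert i Y = X \<inter> Y" "insert i X \<inter> Y = X \<inter> Y"
      "insert i X \<inter> insert i Y = insert i (X \<inter> Y)" "X \<union> insert i Y = insert i (X \<union> Y)"
      "insert i X \<union> Y = insert i (X \<union> Y)" "insert i X \<union> insert i Y = insert i (X \<union> Y)"
      by auto
    moreover have "X \<subseteq> insert i I" "Y \<subseteq> insert i I" "insert i X \<subseteq> insert i I"
      "insert i Y \<subseteq> insert i I" "X \<inter> Y \<subseteq> insert i I" "insert i (X \<inter> Y) \<subseteq> insert i I"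
      "X \<union> Y \<subseteq> insert i I" "insert i (X \<union> Y) \<subseteq> insert i I"
      using X Y by auto
    ultimately show "?a X * ?b Y \<le> ?c (X \<inter> Y) * ?d (X \<union> Y)"
      using insert.prems by (intro four_functions_two_point) metis+
  qed
  then show ?case using insert.hyps by (simp add: sum_Pow_insert)
qed

lemma hypograph_lattice_embedding:
  fixes S :: "('a \<Rightarrow> 'b::{linorder,lattice}) set"
  assumes "finite S" "finite U"
    and agree: "\<And>g g' u. g \<in> S \<Longrightarrow> g' \<in> S \<Longrightarrow> u \<notin> U \<Longrightarrow> g u = g' u"
  obtains P :: "('a \<times> 'b) set" and enc where "finite P" "inj_on enc S" "\<And>g. enc g \<subseteq> P"
    "\<And>g g'. enc (inf g g') = enc g \<inter> enc g'" "\<And>g g'. enc (sup g g') = enc g \<union> enc g'"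
proof -
  define P where "P = Sigma U (\<lambda>u. (\<lambda>g. g u) ` S)"
  define enc where "enc g = {p\<in>P. snd p \<le> g (fst p)}" for g :: "'a \<Rightarrow> 'b"
  have "finite P" unfolding P_def using assms(1,2) by auto
  moreover have "inj_on enc S"
  proof (rule inj_onI, rule ext)
    fix g g' u assume g: "g \<in> S" and g': "g' \<in> S" and e: "enc g = enc g'"
    show "g u = g' u"
    proof (cases "u \<in> U")
      case True
      then have "(u, g u) \<in> enc g" "(u, g' u) \<in> enc g'" unfolding enc_def P_def using g g' by auto
      then have "(u, g u) \<in> enc g'" "(u, g' u) \<in> enc g" using e by simp_all
      then have "g u \<le> g' u" "g' u \<le> g u" unfolding enc_def by auto
      then show ?thesis by (rule antisym)
    qed (use agree g g' in blast)
  qed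
  ultimately show ?thesis
    by (rule that) (auto simp: enc_def inf_min sup_max le_max_iff_disj)
qed

theorem holley_inequality:
  fixes S :: "('a \<Rightarrow> 'b::{linorder,lattice}) set" and w1 w2 :: "('a \<Rightarrow> 'b) \<Rightarrow> real"
  assumes "finite S" "finite U"
    and "\<And>g g' u. g \<in> S \<Longrightarrow> g' \<in> S \<Longrightarrow> u \<notin> U \<Longrightarrow> g u = g' u"
    and lattice: "\<And>g g'. g \<in> S \<Longrightarrow> g' \<in> S \<Longrightarrow> inf g g' \<in> S \<and> sup g g' \<in> S"
    and nonneg: "\<And>g. g \<in> S \<Longrightarrow> 0 \<le> w1 g \<and> 0 \<le> w2 g"
    and cond: "\<And>g g'. g \<in> S \<Longrightarrow> g' \<in> S \<Longrightarrow> w1 g * w2 g' \<le> w1 (inf g g') * w2 (sup g g')"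
    and up: "\<And>g g'. g \<in> A \<Longrightarrow> g \<le> g' \<Longrightarrow> g' \<in> A"
  shows "(\<Sum>g\<in>S \<inter> A. w1 g) * (\<Sum>g\<in>S. w2 g) \<le> (\<Sum>g\<in>S. w1 g) * (\<Sum>g\<in>S \<inter> A. w2 g)"
proof -
  obtain P :: "('a \<times> 'b) set" and enc
    where "finite P" and inj: "inj_on enc S" and enc_P: "\<And>g. enc g \<subseteq> P"
    and enc_inf: "\<And>g g'. enc (inf g g') = enc g \<inter> enc g'"
    and enc_sup: "\<And>g g'. enc (sup g g') = enc g \<union> enc g'"
    by (rule hypograph_lattice_embedding[of S U]) (use assms(1-3) in blast)+
  \<comment> \<open>push the weights forward along \<open>enc\<close> and apply the four functions theorem on \<open>Pow P\<close>\<close>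
  define fibre where "fibre T w X = sum w {g\<in>T. enc g = X}"
    for T and w :: "('a \<Rightarrow> 'b) \<Rightarrow> real" and X
  have fibre_sum: "sum (fibre T w) (Pow P) = sum w T" if "T \<subseteq> S" for T w
    unfolding fibre_def using that \<open>finite S\<close> \<open>finite P\<close> enc_P
    by (intro sum.group) (auto intro: finite_subset)
  have fibre_enc: "fibre T w (enc g) = w g" if "T \<subseteq> S" "g \<in> T" for T w g
  proof -
    have "{g'\<in>T. enc g' = enc g} = {g}" using inj that unfolding inj_on_def by blast
    then show ?thesis unfolding fibre_def by simp
  qed
  have fibre_nonneg: "0 \<le> fibre T w1 X" "0 \<le> fibre T w2 X" if "T \<subseteq> S" for T X
    unfolding fibre_def using nonneg that by (auto intro: sum_nonneg)
  have "sum (fibre (S \<inter> A) w1) (Pow P) * sum (fibre S w2) (Pow P)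
      \<le> sum (fibre S w1) (Pow P) * sum (fibre (S \<inter> A) w2) (Pow P)"
  proof (rule four_functions[OF \<open>finite P\<close>])
    fix X Y
    show "fibre (S \<inter> A) w1 X * fibre S w2 Y \<le> fibre S w1 (X \<inter> Y) * fibre (S \<inter> A) w2 (X \<union> Y)"
    proof (cases "X \<in> enc ` (S \<inter> A) \<and> Y \<in> enc ` S")
      case True
      then obtain g g' where g: "g \<in> S" "g \<in> A" "X = enc g" and g': "g' \<in> S" "Y = enc g'" by auto
      have "sup g g' \<in> A" using up[OF g(2)] by simp
      then show ?thesis
        using cond[OF g(1) g'(1)] lattice[OF g(1) g'(1)] g g'
        by (simp add: fibre_enc enc_inf[symmetric] enc_sup[symmetric])
    next
      case False
      then have "{g\<in>S \<inter> A. enc g = X} = {} \<or> {g\<in>S. enc g = Y} = {}" by auto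
      then consider "fibre (S \<inter> A) w1 X = 0" | "fibre S w2 Y = 0"
        unfolding fibre_def by (elim disjE) (simp_all only: sum.empty)
      then show ?thesis by cases (simp_all add: fibre_nonneg mult_nonneg_nonneg)
    qed
  qed (use fibre_nonneg in auto)
  then show ?thesis by (simp add: fibre_sum)
qed

section \<open>Weighted probabilities\<close>

definition weighted_prob :: "'a set \<Rightarrow> ('a \<Rightarrow> real) \<Rightarrow> 'a set \<Rightarrow> real" where
  "weighted_prob S w A = (\<Sum>x\<in>S \<inter> A. w x) / (\<Sum>x\<in>S. w x)"

corollary holley_weighted_prob:
  fixes S :: "('a \<Rightarrow> 'b::{linorder,lattice}) set" and w1 w2 :: "('a \<Rightarrow> 'b) \<Rightarrow> real"
  assumes "finite S" "finite U"
    and "\<And>g g' u. g \<in> S \<Longrightarrow> g' \<in> S \<Longrightarrow> u \<notin> U \<Longrightarrow> g u = g' u"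
    and "\<And>g g'. g \<in> S \<Longrightarrow> g' \<in> S \<Longrightarrow> inf g g' \<in> S \<and> sup g g' \<in> S"
    and "\<And>g. g \<in> S \<Longrightarrow> 0 \<le> w1 g \<and> 0 \<le> w2 g"
    and "\<And>g g'. g \<in> S \<Longrightarrow> g' \<in> S \<Longrightarrow> w1 g * w2 g' \<le> w1 (inf g g') * w2 (sup g g')"
    and "\<And>g g'. g \<in> A \<Longrightarrow> g \<le> g' \<Longrightarrow> g' \<in> A"
    and "0 < sum w1 S" "0 < sum w2 S"
  shows "weighted_prob S w1 A \<le> weighted_prob S w2 A"
proof -
  have "(\<Sum>g\<in>S \<inter> A. w1 g) * (\<Sum>g\<in>S. w2 g) \<le> (\<Sum>g\<in>S. w1 g) * (\<Sum>g\<in>S \<inter> A. w2 g)"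
    by (rule holley_inequality[of S U]) (fact assms)+
  then show ?thesis
    using assms(8,9) unfolding weighted_prob_def by (simp add: divide_simps mult.commute)
qed

lemma weighted_prob_cong:
  "(\<And>x. x \<in> S \<Longrightarrow> w x = w' x) \<Longrightarrow> weighted_prob S w A = weighted_prob S w' A"
  unfolding weighted_prob_def by (metis (no_types, lifting) IntD1 sum.cong)

lemma weighted_prob_cmult: "k \<noteq> 0 \<Longrightarrow> weighted_prob S (\<lambda>x. k * w x) A = weighted_prob S w A"
  unfolding weighted_prob_def by (simp flip: sum_distrib_left)

lemma weighted_prob_power_tendsto_0:
  fixes w :: "'a \<Rightarrow> real" and N :: "'a \<Rightarrow> nat"
  assumes "finite S" "(\<Sum>x\<in>{x\<in>S. N x = 0}. w x) \<noteq> 0"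
  shows "((\<lambda>t. weighted_prob S (\<lambda>x. w x * t ^ N x) A) \<longlongrightarrow> weighted_prob {x\<in>S. N x = 0} w A)
    (at_right 0)"
proof -
  have at_0: "(\<Sum>x\<in>T. w x * 0 ^ N x) = (\<Sum>x\<in>{x\<in>T. N x = 0}. w x)" if "T \<subseteq> S" for T
    using finite_subset[OF that assms(1)]
    by (simp add: sum.inter_filter power_0_left if_distrib cong: if_cong)
  have "{x\<in>S \<inter> A. N x = 0} = {x\<in>S. N x = 0} \<inter> A" by auto
  then show ?thesis
    unfolding weighted_prob_def using at_0[of S] at_0[of "S \<inter> A"] assms(2)
    by (auto intro!: tendsto_eq_intros)
qed

lemma weighted_prob_power_tendsto_infinity:
  fixes w :: "'a \<Rightarrow> real" and N :: "'a \<Rightarrow> nat"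
  assumes "finite S" "\<And>x. x \<in> S \<Longrightarrow> N x \<le> M" "(\<Sum>x\<in>{x\<in>S. N x = M}. w x) \<noteq> 0"
  shows "((\<lambda>t. weighted_prob S (\<lambda>x. w x * t ^ N x) A) \<longlongrightarrow> weighted_prob {x\<in>S. N x = M} w A) at_top"
proof -
  have "{x\<in>S. M - N x = 0} = {x\<in>S. N x = M}" using assms(2) by force
  then have "((\<lambda>s. weighted_prob S (\<lambda>x. w x * s ^ (M - N x)) A) \<longlongrightarrow> weighted_prob {x\<in>S. N x = M} w A)
      (at_right 0)"
    using weighted_prob_power_tendsto_0[OF assms(1), where N = "\<lambda>x. M - N x" and w = w and A = A]
      assms(3) by simp
  moreover have "\<forall>\<^sub>F s in at_right 0. weighted_prob S (\<lambda>x. w x * s ^ (M - N x)) A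
      = weighted_prob S (\<lambda>x. w x * inverse s ^ N x) A"
    unfolding eventually_at_right_field
  proof (intro exI[of _ 1] conjI allI impI)
    fix s :: real assume "0 < s" "s < 1"
    have "weighted_prob S (\<lambda>x. w x * inverse s ^ N x) A
        = weighted_prob S (\<lambda>x. s ^ M * (w x * inverse s ^ N x)) A"
      using \<open>0 < s\<close> by (simp add: weighted_prob_cmult)
    also have "\<dots> = weighted_prob S (\<lambda>x. w x * s ^ (M - N x)) A"
      using \<open>0 < s\<close> assms(2)
      by (intro weighted_prob_cong) (simp add: power_diff field_simps power_inverse)
    finally show "weighted_prob S (\<lambda>x. w x * s ^ (M - N x)) A
        = weighted_prob S (\<lambda>x. w x * inverse s ^ N x) A" ..
  qed simp
  ultimately have "((\<lambda>s. weighted_prob S (\<lambda>x. w x * inverse s ^ N x) A)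
      \<longlongrightarrow> weighted_prob {x\<in>S. N x = M} w A) (at_right 0)"
    by (rule Lim_transform_eventually)
  then show ?thesis by (simp add: filterlim_at_top_to_right)
qed

lemma weighted_prob_le_of_bij_increasing:
  fixes \<phi> :: "'a::order \<Rightarrow> 'a"
  assumes bij: "bij_betw \<phi> S T" and w: "\<And>g. g \<in> S \<Longrightarrow> w (\<phi> g) = w g" and le: "\<And>g. g \<in> S \<Longrightarrow> g \<le> \<phi> g"
    and up: "\<And>g g'. g \<in> A \<Longrightarrow> g \<le> g' \<Longrightarrow> g' \<in> A" and "finite T" and nonneg: "\<And>h. h \<in> T \<Longrightarrow> 0 \<le> w h"
  shows "weighted_prob S w A \<le> weighted_prob T w A"
proof -
  have sum_image: "(\<Sum>g\<in>S'. w g) = (\<Sum>h\<in>\<phi> ` S'. w h)" if "S' \<subseteq> S" for S'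
  proof -
    have "(\<Sum>h\<in>\<phi> ` S'. w h) = (\<Sum>g\<in>S'. w (\<phi> g))"
      using sum.reindex[OF inj_on_subset[OF bij_betw_imp_inj_on[OF bij] that]] by simp
    also have "\<dots> = (\<Sum>g\<in>S'. w g)" using w that by (intro sum.cong) auto
    finally show ?thesis ..
  qed
  have "\<phi> ` (S \<inter> A) \<subseteq> T \<inter> A" using bij up le unfolding bij_betw_def by blast
  then have "(\<Sum>g\<in>S \<inter> A. w g) \<le> (\<Sum>h\<in>T \<inter> A. w h)"
    unfolding sum_image[of "S \<inter> A", OF Int_lower1] using \<open>finite T\<close> nonneg by (intro sum_mono2) auto
  moreover have "(\<Sum>g\<in>S. w g) = (\<Sum>h\<in>T. w h)"
    using sum_image[of S] bij unfolding bij_betw_def by simp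
  ultimately show ?thesis
    unfolding weighted_prob_def using nonneg by (simp add: divide_right_mono sum_nonneg)
qed

lemma mono_extension_by_limits:
  fixes P :: "real \<Rightarrow> real" and z z' :: ereal
  assumes mono: "\<And>x y. 0 < x \<Longrightarrow> x \<le> y \<Longrightarrow> P x \<le> P y"
    and lim0: "(P \<longlongrightarrow> L0) (at_right 0)" and lim_inf: "(P \<longlongrightarrow> L1) at_top"
    and "0 \<le> z" "z \<le> z'"
  defines "F \<equiv> \<lambda>z. if z = 0 then Lim (at_right 0) P
                   else if z = \<infinity> then Lim at_top P else P (real_of_ereal z)"
  shows "F z \<le> F z'"
proof -
  have F0: "F 0 = L0" unfolding F_def using tendsto_Lim[OF _ lim0] by simp
  have F1: "F \<infinity> = L1" unfolding F_def using tendsto_Lim[OF _ lim_inf] by simp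
  have below: "L0 \<le> P x" if "0 < x" for x
    by (rule tendsto_upperbound[OF lim0])
      (use that mono in \<open>auto simp: eventually_at_right_field intro!: exI[of _ x]\<close>)
  have above: "P x \<le> L1" if "0 < x" for x
    by (rule tendsto_lowerbound[OF lim_inf], rule eventually_mono[OF eventually_ge_at_top[of x]])
      (use that mono in auto)
  have cases: "z = 0 \<or> z = \<infinity> \<or> (\<exists>r>0. z = ereal r \<and> F z = P r)" if "0 \<le> z" for z
    using that unfolding F_def by (cases z) auto
  have "L0 \<le> L1" using below[of 1] above[of 1] by simp
  have "0 \<le> z'" using \<open>0 \<le> z\<close> \<open>z \<le> z'\<close> by (rule order_trans)
  show ?thesis
  proof (cases "z = 0 \<or> z' = \<infinity>")
    case True
    then show ?thesis
      using cases[OF \<open>0 \<le> z\<close>] cases[OF \<open>0 \<le> z'\<close>] F0 F1 below above \<open>L0 \<le> L1\<close> by auto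
  next
    case False
    then have "z \<noteq> \<infinity>" "z' \<noteq> 0" using \<open>z \<le> z'\<close> \<open>0 \<le> z\<close> by auto
    then obtain r r' where "0 < r" "z = ereal r" "F z = P r" "z' = ereal r'" "F z' = P r'"
      using cases[OF \<open>0 \<le> z\<close>] cases[OF \<open>0 \<le> z'\<close>] False by auto
    then show ?thesis using \<open>z \<le> z'\<close> mono by simp
  qed
qed

section \<open>Height functions and vertex weights\<close>

lemma adj_face_sym: "adj_face u w \<Longrightarrow> adj_face w u"
  unfolding adj_face_def by linarith

lemma adj_face_parity: "adj_face u w \<Longrightarrow> even_face u \<longleftrightarrow> \<not> even_face w"
  unfolding adj_face_def even_face_def by (auto simp: abs_if split: if_splits; presburger)

lemma height_function_bc: "height_function (bc n)"
  unfolding height_function_def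
proof (intro conjI allI impI)
  fix u w assume "adj_face u w"
  then show "\<bar>bc n u - bc n w\<bar> = 1" unfolding bc_def using adj_face_parity by auto
qed (simp add: bc_def)

lemma height_function_parity_diff:
  assumes "height_function h" "height_function h'"
  shows "even (h u - h' u)"
proof -
  have "even (h u) \<longleftrightarrow> even_face u" "even (h' u) \<longleftrightarrow> even_face u"
    using assms unfolding height_function_def by blast+
  then show ?thesis by simp
qed

lemma height_function_uminus: "height_function h \<Longrightarrow> height_function (- h)"
  unfolding height_function_def by (simp add: abs_minus_commute)

lemma height_function_inf:
  assumes "height_function h" "height_function h'"
  shows "height_function (inf h h')"
  unfolding height_function_def
proof (intro conjI allI impI)
  fix u w assume "adj_face u w"
  then have "\<bar>h u - h w\<bar> = 1" "\<bar>h' u - h' w\<bar> = 1"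
    using assms unfolding height_function_def by blast+
  moreover have "even (h u - h' u)" "even (h w - h' w)"
    using height_function_parity_diff[OF assms] by auto
  ultimately show "\<bar>inf h h' u - inf h h' w\<bar> = 1"
    by (simp add: inf_min abs_if min_def split: if_splits; presburger)
next
  fix u
  have "even (h u) \<longleftrightarrow> even_face u" "even (h' u) \<longleftrightarrow> even_face u"
    using assms unfolding height_function_def by blast+
  then show "even (inf h h' u) \<longleftrightarrow> even_face u" by (simp add: inf_min min_def)
qed

lemma height_function_sup:
  assumes "height_function h" "height_function h'"
  shows "height_function (sup h h')"
proof -
  have "sup h h' = - inf (- h) (- h')"
    by (simp add: fun_eq_iff inf_min sup_max min_def max_def)
  then show ?thesis using assms by (simp add: height_function_uminus height_function_inf)
qed

lemma height_function_override_on: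
  assumes "height_function g" "height_function t" "\<And>w. w \<in> ext_bdry D \<Longrightarrow> g w = t w"
  shows "height_function (override_on t g D)"
  unfolding height_function_def
proof (intro conjI allI impI)
  fix u w assume adj: "adj_face u w"
  have steps: "\<bar>g u - g w\<bar> = 1" "\<bar>t u - t w\<bar> = 1"
    using adj assms(1,2) unfolding height_function_def by blast+
  show "\<bar>override_on t g D u - override_on t g D w\<bar> = 1"
  proof (cases "u \<in> D"; cases "w \<in> D")
    assume "u \<in> D" "w \<notin> D"
    then have "w \<in> ext_bdry D" using adj adj_face_sym unfolding ext_bdry_def by blast
    then show ?thesis using steps assms(3) \<open>u \<in> D\<close> \<open>w \<notin> D\<close> by simp
  next
    assume "u \<notin> D" "w \<in> D"
    then have "u \<in> ext_bdry D" using adj unfolding ext_bdry_def by blast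
    then show ?thesis using steps assms(3) \<open>u \<notin> D\<close> \<open>w \<in> D\<close> by simp
  qed (use steps in auto)
next
  fix u
  have "even (g u) \<longleftrightarrow> even_face u" "even (t u) \<longleftrightarrow> even_face u"
    using assms(1,2) unfolding height_function_def by blast+
  then show "even (override_on t g D u) \<longleftrightarrow> even_face u" unfolding override_on_def by simp
qed

lemma adj_face_corners:
  "adj_face (SW v) (SE v)" "adj_face (SE v) (NE v)"
  "adj_face (NE v) (NW v)" "adj_face (NW v) (SW v)"
  unfolding adj_face_def SW_def SE_def NE_def NW_def by auto

lemma height_function_diagonals:
  assumes "height_function h"
  shows "h (SW v) = h (NE v) \<or> \<bar>h (SW v) - h (NE v)\<bar> = 2"
    and "h (NW v) = h (SE v) \<or> \<bar>h (NW v) - h (SE v)\<bar> = 2"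
    and "h (SW v) = h (NE v) \<or> h (NW v) = h (SE v)"
proof -
  have "\<bar>h (SW v) - h (SE v)\<bar> = 1" "\<bar>h (SE v) - h (NE v)\<bar> = 1"
    "\<bar>h (NE v) - h (NW v)\<bar> = 1" "\<bar>h (NW v) - h (SW v)\<bar> = 1"
    using assms adj_face_corners unfolding height_function_def by blast+
  then show "h (SW v) = h (NE v) \<or> \<bar>h (SW v) - h (NE v)\<bar> = 2"
    and "h (NW v) = h (SE v) \<or> \<bar>h (NW v) - h (SE v)\<bar> = 2"
    and "h (SW v) = h (NE v) \<or> h (NW v) = h (SE v)"
    by (auto simp: abs_if split: if_splits)
qed

text \<open>\<open>c = (ab/c)(c/b)(c/a)\<close>, \<open>a = (ab/c)(c/b)\<close>, \<open>b = (ab/c)(c/a)\<close>, and at every vertex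
  at least one diagonal of a height function is constant.\<close>
lemma vweight_eq_power_diagonals:
  assumes "height_function h" "0 < a" "0 < b" "0 < c"
  shows "vweight a b c h v = a * b / c * (c / b) ^ of_bool (h (SW v) = h (NE v))
                              * (c / a) ^ of_bool (h (NW v) = h (SE v))"
  using height_function_diagonals(3)[OF assms(1), of v] assms(2-4)
  unfolding vweight_def type_c_def type_a_def type_b_def by auto

lemma diagonal_agreement_inf_sup:
  fixes s n s' n' :: int
  assumes "s = n \<or> \<bar>s - n\<bar> = 2" "s' = n' \<or> \<bar>s' - n'\<bar> = 2" "even (s - s')"
  shows "of_bool (s = n) + of_bool (s' = n') \<le>
    (of_bool (min s s' = min n n') + of_bool (max s s' = max n n') :: nat)"
  using assms by (auto simp: min_def max_def abs_if split: if_splits; presburger)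

lemma vweight_lattice_condition:
  assumes "height_function h" "height_function h'" "0 < a" "0 < b" "a \<le> c" "b \<le> c"
  shows "vweight a b c h v * vweight a b c h' v
    \<le> vweight a b c (inf h h') v * vweight a b c (sup h h') v"
proof -
  let ?X = "\<lambda>g. of_bool (g (SW v) = g (NE v)) :: nat"
  let ?Y = "\<lambda>g. of_bool (g (NW v) = g (SE v)) :: nat"
  have hfs: "height_function (inf h h')" "height_function (sup h h')"
    using height_function_inf[OF assms(1,2)] height_function_sup[OF assms(1,2)] .
  have prod: "vweight a b c g v * vweight a b c g' v
      = (a * b / c) ^ 2 * (c / b) ^ (?X g + ?X g') * (c / a) ^ (?Y g + ?Y g')"
    if "height_function g" "height_function g'" for g g'
    using vweight_eq_power_diagonals[OF that(1)] vweight_eq_power_diagonals[OF that(2)] assms(3-6)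
    by (simp add: power_add power2_eq_square)
  have "?X h + ?X h' \<le> ?X (inf h h') + ?X (sup h h')" "?Y h + ?Y h' \<le> ?Y (inf h h') + ?Y (sup h h')"
    using diagonal_agreement_inf_sup height_function_diagonals(1,2)[OF assms(1)]
      height_function_diagonals(1,2)[OF assms(2)] height_function_parity_diff[OF assms(1,2)]
    by (simp_all add: inf_fun_def sup_fun_def inf_min sup_max)
  moreover have "1 \<le> c / b" "1 \<le> c / a" using assms(3-6) by simp_all
  ultimately have "(c / b) ^ (?X h + ?X h') \<le> (c / b) ^ (?X (inf h h') + ?X (sup h h'))"
    "(c / a) ^ (?Y h + ?Y h') \<le> (c / a) ^ (?Y (inf h h') + ?Y (sup h h'))"
    by (simp_all only: power_increasing)
  then show ?thesis
    unfolding prod[OF assms(1,2)] prod[OF hfs] using assms(3-6)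
    by (intro mult_mono mult_left_mono) simp_all
qed

lemma even_card_changes_iff:
  fixes g :: "nat \<Rightarrow> bool"
  shows "even (card {k. k < n \<and> g (Suc k) \<noteq> g k}) \<longleftrightarrow> g n = g 0"
proof (induction n)
  case 0
  then show ?case by simp
next
  case (Suc n)
  let ?C = "\<lambda>n. {k. k < n \<and> g (Suc k) \<noteq> g k}"
  show ?case
  proof (cases "g (Suc n) = g n")
    case True
    then have "?C (Suc n) = ?C n" by (auto simp: less_Suc_eq)
    then show ?thesis using Suc.IH True by simp
  next
    case False
    then have "?C (Suc n) = insert n (?C n)" by (auto simp: less_Suc_eq)
    then show ?thesis using Suc.IH False by auto
  qed
qed

text \<open>Crossings of the column line \<open>x = i - 1/2\<close> by a closed lattice walk are the changes of
  the indicator \<open>x \<ge> i\<close> along the walk, so there is an even number of them.\<close>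
lemma closed_walk_column_crossings_even:
  assumes "cs \<noteq> []"
    and adj: "\<And>k. k < length cs \<Longrightarrow> adj_vertex (cs ! k) (cs ! ((k + 1) mod length cs))"
  shows "even (card {k. k < length cs \<and>
    (\<exists>y. {cs ! k, cs ! ((k + 1) mod length cs)} = {(i - 1, y), (i, y)})})"
proof -
  define n where "n = length cs"
  define g where "g k \<longleftrightarrow> i \<le> fst (cs ! (k mod n))" for k
  have "(\<exists>y. {cs ! k, cs ! ((k + 1) mod n)} = {(i - 1, y), (i, y)}) \<longleftrightarrow> g (Suc k) \<noteq> g k"
    if "k < n" for k
  proof -
    obtain p1 p2 q1 q2 where p: "cs ! k = (p1, p2)" and q: "cs ! ((k + 1) mod n) = (q1, q2)"
      by fastforce
    have "\<bar>p1 - q1\<bar> + \<bar>p2 - q2\<bar> = 1" using adj[of k] that p q unfolding adj_vertex_def n_def by simp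
    moreover have "g k \<longleftrightarrow> i \<le> p1" "g (Suc k) \<longleftrightarrow> i \<le> q1" unfolding g_def using that p q by simp_all
    ultimately show ?thesis unfolding p q doubleton_eq_iff by (auto simp: abs_if split: if_splits)
  qed
  then have eq: "{k. k < length cs \<and>
      (\<exists>y. {cs ! k, cs ! ((k + 1) mod length cs)} = {(i - 1, y), (i, y)})}
      = {k. k < n \<and> g (Suc k) \<noteq> g k}" unfolding n_def by blast
  have "g n = g 0" unfolding g_def by simp
  then show ?thesis unfolding eq using even_card_changes_iff[of n g] by simp
qed

lemma crossing_edge_mem:
  assumes "cs \<noteq> []" "k < length cs" "{cs ! k, cs ! ((k + 1) mod length cs)} = {(i - 1, y), (i, y)}"
  shows "(i, y) \<in> set cs"
proof -
  have "cs ! k \<in> set cs" "cs ! ((k + 1) mod length cs) \<in> set cs" using assms(1,2) by auto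
  then show ?thesis using assms(3) by (auto simp: doubleton_eq_iff)
qed

lemma enclosed_faces_subset:
  assumes "simple_cycle cs"
  shows "enclosed_faces cs \<subseteq> fst ` set cs \<times> {Min (snd ` set cs)<..Max (snd ` set cs)}"
proof
  fix u assume "u \<in> enclosed_faces cs"
  obtain i j where u: "u = (i, j)" by fastforce
  have "cs \<noteq> []" using assms unfolding simple_cycle_def by auto
  define C where "C = (\<lambda>P. {k. k < length cs \<and>
    (\<exists>y. P y \<and> {cs ! k, cs ! ((k + 1) mod length cs)} = {(i - 1, y), (i, y)})})"
  have odd: "odd (card (C (\<lambda>y. j \<le> y)))"
    using \<open>u \<in> enclosed_faces cs\<close> unfolding enclosed_faces_def crossings_def C_def u by simp
  then have "C (\<lambda>y. j \<le> y) \<noteq> {}" by auto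
  then obtain k y where k: "k < length cs" and "j \<le> y"
    and e: "{cs ! k, cs ! ((k + 1) mod length cs)} = {(i - 1, y), (i, y)}"
    unfolding C_def by auto
  have "(i, y) \<in> set cs" by (rule crossing_edge_mem[OF \<open>cs \<noteq> []\<close> k e])
  then have "i \<in> fst ` set cs" "y \<in> snd ` set cs" by force+
  then have "y \<le> Max (snd ` set cs)" by simp
  moreover have "Min (snd ` set cs) < j"
  proof (rule ccontr)
    assume "\<not> Min (snd ` set cs) < j"
    \<comment> \<open>then every crossing of column \<open>i\<close> lies above \<open>u\<close>\<close>
    have "j \<le> y"
      if "k < length cs" "{cs ! k, cs ! ((k + 1) mod length cs)} = {(i - 1, y), (i, y)}" for k y
    proof -
      have "y \<in> snd ` set cs" using crossing_edge_mem[OF \<open>cs \<noteq> []\<close> that] by force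
      then have "Min (snd ` set cs) \<le> y" by simp
      then show ?thesis using \<open>\<not> Min (snd ` set cs) < j\<close> by simp
    qed
    then have "C (\<lambda>y. j \<le> y) = C (\<lambda>y. True)" unfolding C_def by blast
    then show False
      using odd closed_walk_column_crossings_even[OF \<open>cs \<noteq> []\<close>, of i] assms
      unfolding simple_cycle_def C_def by simp
  qed
  ultimately show "u \<in> fst ` set cs \<times> {Min (snd ` set cs)<..Max (snd ` set cs)}"
    using u \<open>i \<in> fst ` set cs\<close> \<open>j \<le> y\<close> by auto
qed

lemma is_domain_finite:
  assumes "is_domain D"
  shows "finite D"
proof -
  obtain cs where "simple_cycle cs" "D = enclosed_faces cs" using assms unfolding is_domain_def by blast
  then show ?thesis by (auto intro: finite_subset[OF enclosed_faces_subset])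
qed

lemma Omega_D_outside: "h \<in> Omega_D D \<Longrightarrow> u \<notin> D \<Longrightarrow> h u = bc 0 u"
  unfolding Omega_D_def by blast

lemma Omega_D_height_function: "h \<in> Omega_D D \<Longrightarrow> height_function h"
  unfolding Omega_D_def by blast

lemma Omega_D_inf_sup:
  assumes "h \<in> Omega_D D" "h' \<in> Omega_D D"
  shows "inf h h' \<in> Omega_D D \<and> sup h h' \<in> Omega_D D"
  using assms height_function_inf height_function_sup unfolding Omega_D_def by simp

lemma bc_0_in_Omega_D: "bc 0 \<in> Omega_D D"
  unfolding Omega_D_def using height_function_bc by simp

lemma Omega_D_finite:
  assumes "finite D"
  shows "finite (Omega_D D)"
proof -
  define Yt Yb where "Yt = Max (insert 0 (snd ` D))" and "Yb = Min (insert 0 (snd ` D))"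
  have Y: "Yb \<le> snd w" "snd w \<le> Yt" if "w \<in> D" for w
    unfolding Yt_def Yb_def using assms that by simp_all
  define B where "B = 2 + Yt - Yb"
  have bounded: "\<bar>h u\<bar> \<le> B" if h: "h \<in> Omega_D D" and "u \<in> D" for h u
  proof -
    note hf = Omega_D_height_function[OF h] and out = Omega_D_outside[OF h]
    \<comment> \<open>walk down from the face above \<open>D\<close> in the column of \<open>u\<close>\<close>
    have col: "\<bar>h (i, Yt + 1 - int m)\<bar> \<le> 1 + int m" for m i
    proof (induction m)
      case 0
      have "(i, Yt + 1) \<notin> D" using Y by force
      then show ?case using out by (simp add: bc_def)
    next
      case (Suc m)
      have "adj_face (i, Yt + 1 - int (Suc m)) (i, Yt + 1 - int m)" unfolding adj_face_def by simp
      then have "\<bar>h (i, Yt + 1 - int (Suc m)) - h (i, Yt + 1 - int m)\<bar> = 1"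
        using hf unfolding height_function_def by blast
      then show ?case using Suc by simp
    qed
    obtain i j where u: "u = (i, j)" by fastforce
    have "j \<le> Yt" "Yb \<le> j" using Y \<open>u \<in> D\<close> unfolding u by force+
    then show ?thesis using col[of i "nat (Yt + 1 - j)"] unfolding u B_def by simp
  qed
  have "Omega_D D \<subseteq> (\<lambda>f. override_on (bc 0) f D) ` PiE D (\<lambda>_. {-B..B})"
  proof
    fix h assume h: "h \<in> Omega_D D"
    then have "h = override_on (bc 0) (restrict h D) D"
      using Omega_D_outside by (auto simp: override_on_def)
    moreover have "restrict h D \<in> PiE D (\<lambda>_. {-B..B})"
      using bounded[OF h] by (force simp: abs_le_iff)
    ultimately show "h \<in> (\<lambda>f. override_on (bc 0) f D) ` PiE D (\<lambda>_. {-B..B})" by blast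
  qed
  then show ?thesis by (rule finite_subset) (use assms in \<open>auto intro: finite_PiE\<close>)
qed

lemma faces_at_eq: "faces_at v = {SW v, SE v, NW v, NE v}"
  unfolding faces_at_def SW_def SE_def NW_def NE_def by auto

lemma faces_at_around:
  assumes "u \<in> faces_at v"
  obtains d q r where "faces_at v = {u, d, q, r}" "d \<noteq> u" "q \<noteq> u" "r \<noteq> u"
    "adj_face u q" "adj_face u r" "adj_face d q" "\<And>h. type_c h v \<longleftrightarrow> h u = h d \<and> h q = h r"
proof -
  have "u = SW v \<or> u = SE v \<or> u = NW v \<or> u = NE v" using assms unfolding faces_at_eq by auto
  then show ?thesis
  proof (elim disjE)
    assume u: "u = SW v" show ?thesis
      by (intro that[of "NE v" "SE v" "NW v"])
        (auto simp: u faces_at_eq type_c_def adj_face_def SW_def SE_def NW_def NE_def prod_eq_iff)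
  next
    assume u: "u = SE v" show ?thesis
      by (intro that[of "NW v" "SW v" "NE v"])
        (auto simp: u faces_at_eq type_c_def adj_face_def SW_def SE_def NW_def NE_def prod_eq_iff)
  next
    assume u: "u = NW v" show ?thesis
      by (intro that[of "SE v" "SW v" "NE v"])
        (auto simp: u faces_at_eq type_c_def adj_face_def SW_def SE_def NW_def NE_def prod_eq_iff)
  next
    assume u: "u = NE v" show ?thesis
      by (intro that[of "SW v" "SE v" "NW v"])
        (auto simp: u faces_at_eq type_c_def adj_face_def SW_def SE_def NW_def NE_def prod_eq_iff)
  qed
qed

lemma bdryV_obtain_face:
  assumes "v \<in> bdryV D"
  obtains u where "faces_at v \<inter> D = {u}"
proof -
  have "card (faces_at v \<inter> D) = 1" using assms unfolding bdryV_def by simp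
  then obtain u where "faces_at v \<inter> D = {u}" by (rule card_1_singletonE)
  then show ?thesis by (rule that)
qed

lemma bdryV_face_height:
  assumes "even_domain D" "v \<in> bdryV D" "faces_at v \<inter> D = {u}" "h \<in> Omega_D D"
  shows "\<not> even_face u" and "h u = (if type_c h v then 1 else -1)"
proof -
  have "u \<in> faces_at v" "u \<in> D" using assms(3) by auto
  obtain d q r where around: "faces_at v = {u, d, q, r}" "d \<noteq> u" "q \<noteq> u" "r \<noteq> u"
    "adj_face u q" "adj_face u r" "adj_face d q" "\<And>h. type_c h v \<longleftrightarrow> h u = h d \<and> h q = h r"
    using faces_at_around[OF \<open>u \<in> faces_at v\<close>] by metis
  then have out: "d \<notin> D" "q \<notin> D" "r \<notin> D" using assms(3) by blast+
  have "q \<in> ext_bdry D" "r \<in> ext_bdry D"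
    using out \<open>u \<in> D\<close> around(5,6) adj_face_sym unfolding ext_bdry_def by blast+
  then have "even_face q" "even_face r" using assms(1) unfolding even_domain_def by blast+
  then have odd: "\<not> even_face u" "\<not> even_face d" using adj_face_parity around(5,7) by blast+
  have "h d = 1" "h q = 0" "h r = 0"
    using Omega_D_outside[OF assms(4)] out odd \<open>even_face q\<close> \<open>even_face r\<close> by (simp_all add: bc_def)
  moreover have "\<bar>h u - h q\<bar> = 1"
    using Omega_D_height_function[OF assms(4)] around(5) unfolding height_function_def by blast
  ultimately show "h u = (if type_c h v then 1 else -1)" using around(8) by auto
  show "\<not> even_face u" by (fact odd(1))
qed

lemma faces_at_interior_vertex:
  assumes "v \<in> dom_vertices D" "v \<notin> bdryV D" "f \<in> faces_at v"
  shows "f \<in> D \<or> f \<in> ext_bdry D"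
proof (rule ccontr)
  assume f: "\<not> (f \<in> D \<or> f \<in> ext_bdry D)"
  obtain d q r where around: "faces_at v = {f, d, q, r}" "adj_face f q" "adj_face f r"
    using faces_at_around[OF assms(3)] by metis
  \<comment> \<open>the two neighbours of \<open>f\<close> at \<open>v\<close> are outside \<open>D\<close>, so only the opposite face can be in \<open>D\<close>\<close>
  then have "q \<notin> D" "r \<notin> D" using f unfolding ext_bdry_def by blast+
  then have "faces_at v \<inter> D \<subseteq> {d}" using around(1) f by auto
  moreover have "faces_at v \<inter> D \<noteq> {}" using assms(1) unfolding dom_vertices_def by blast
  ultimately have "faces_at v \<inter> D = {d}" by blast
  then show False using assms(2) unfolding bdryV_def by simp
qed

lemma dom_vertices_finite:
  assumes "finite D"
  shows "finite (dom_vertices D)"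
proof -
  have "dom_vertices D
      \<subseteq> (\<Union>u\<in>D. {u, (fst u - 1, snd u), (fst u, snd u - 1), (fst u - 1, snd u - 1)})"
    unfolding dom_vertices_def faces_at_def by auto
  then show ?thesis by (rule finite_subset) (use assms in auto)
qed

lemma bdryV_subset_dom_vertices: "bdryV D \<subseteq> dom_vertices D"
  unfolding bdryV_def dom_vertices_def by (auto simp: card_gt_0_iff[symmetric])

lemma bdryV_finite: "finite D \<Longrightarrow> finite (bdryV D)"
  using finite_subset[OF bdryV_subset_dom_vertices dom_vertices_finite] by blast

lemma even_domain_finite: "even_domain D \<Longrightarrow> finite D"
  unfolding even_domain_def using is_domain_finite by blast

section \<open>Monotonicity in the boundary weight\<close>

definition num_bdry_c :: "face set \<Rightarrow> hfun \<Rightarrow> nat" where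
  "num_bdry_c D h = card {v \<in> bdryV D. type_c h v}"

lemma weight_D_eq_power:
  assumes "finite D"
  shows "weight_D a b c x D h = weight_R a b c D h * x ^ num_bdry_c D h"
proof -
  have "(\<Prod>v\<in>bdryV D. if type_c h v then x else 1) = x ^ card (bdryV D \<inter> {v. type_c h v})"
    by (simp add: prod.If_cases[OF bdryV_finite[OF assms]])
  moreover have "bdryV D \<inter> {v. type_c h v} = {v \<in> bdryV D. type_c h v}" by auto
  ultimately show ?thesis unfolding weight_D_def weight_R_def num_bdry_c_def by simp
qed

lemma vweight_pos: "0 < a \<Longrightarrow> 0 < b \<Longrightarrow> 0 < c \<Longrightarrow> 0 < vweight a b c h v"
  unfolding vweight_def by auto

lemma weight_R_pos: "0 < a \<Longrightarrow> 0 < b \<Longrightarrow> 0 < c \<Longrightarrow> 0 < weight_R a b c D h"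
  unfolding weight_R_def by (intro prod_pos vweight_pos)

lemma weight_D_pos: "0 < a \<Longrightarrow> 0 < b \<Longrightarrow> 0 < c \<Longrightarrow> 0 < x \<Longrightarrow> 0 < weight_D a b c x D h"
  unfolding weight_D_def by (intro mult_pos_pos prod_pos vweight_pos) auto

lemma bdryV_type_c_inf_sup:
  assumes "even_domain D" "v \<in> bdryV D" "h \<in> Omega_D D" "h' \<in> Omega_D D"
  shows "type_c (inf h h') v \<longleftrightarrow> type_c h v \<and> type_c h' v"
    and "type_c (sup h h') v \<longleftrightarrow> type_c h v \<or> type_c h' v"
proof -
  obtain u where u: "faces_at v \<inter> D = {u}" using bdryV_obtain_face[OF assms(2)] .
  note height = bdryV_face_height(2)[OF assms(1,2) u]
  show "type_c (inf h h') v \<longleftrightarrow> type_c h v \<and> type_c h' v"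
    "type_c (sup h h') v \<longleftrightarrow> type_c h v \<or> type_c h' v"
    using height[OF assms(3)] height[OF assms(4)]
      height[OF Omega_D_inf_sup[OF assms(3,4), THEN conjunct1]]
      height[OF Omega_D_inf_sup[OF assms(3,4), THEN conjunct2]]
    by (auto simp: inf_min sup_max split: if_splits)
qed

lemma weight_D_lattice_condition:
  assumes D: "even_domain D" and abc: "0 < a" "0 < b" "max a b \<le> c" and xy: "0 < x" "x \<le> y"
    and h: "h \<in> Omega_D D" "h' \<in> Omega_D D"
  shows "weight_D a b c x D h * weight_D a b c y D h'
    \<le> weight_D a b c x D (inf h h') * weight_D a b c y D (sup h h')"
proof -
  let ?I = "dom_vertices D - bdryV D" and ?B = "bdryV D"
  let ?f = "\<lambda>z g v. if type_c g v then z else (1::real)"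
  have split: "weight_D a b c x D g * weight_D a b c y D g' =
     (\<Prod>v\<in>?I. vweight a b c g v * vweight a b c g' v) * (\<Prod>v\<in>?B. ?f x g v * ?f y g' v)" for g g'
    unfolding weight_D_def prod.distrib by (simp add: mult_ac)
  have hf: "height_function h" "height_function h'" using h Omega_D_height_function by blast+
  have vpos: "0 < vweight a b c g v" for g v using abc by (intro vweight_pos) auto
  have inner: "(\<Prod>v\<in>?I. vweight a b c h v * vweight a b c h' v)
      \<le> (\<Prod>v\<in>?I. vweight a b c (inf h h') v * vweight a b c (sup h h') v)"
    using vweight_lattice_condition[OF hf] vpos abc by (intro prod_mono) (simp add: less_imp_le)
  have bdry: "(\<Prod>v\<in>?B. ?f x h v * ?f y h' v) \<le> (\<Prod>v\<in>?B. ?f x (inf h h') v * ?f y (sup h h') v)"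
    using bdryV_type_c_inf_sup[OF D _ h] xy by (intro prod_mono) auto
  have "0 \<le> (\<Prod>v\<in>?I. vweight a b c h v * vweight a b c h' v)" "0 \<le> (\<Prod>v\<in>?B. ?f x h v * ?f y h' v)"
    using vpos xy by (auto intro!: prod_nonneg simp: less_imp_le)
  then show ?thesis unfolding split using inner bdry by (meson mult_mono order_trans)
qed

lemma increasing_eventD: "increasing_event A \<Longrightarrow> g \<in> A \<Longrightarrow> g \<le> g' \<Longrightarrow> g' \<in> A"
  unfolding increasing_event_def le_fun_def by blast

lemma prob_D_mono:
  assumes D: "even_domain D" and abc: "0 < a" "0 < b" "max a b \<le> c" and xy: "0 < x" "x \<le> y"
    and A: "increasing_event A"
  shows "prob_D a b c x D A \<le> prob_D a b c y D A"
proof -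
  have fin: "finite D" "finite (Omega_D D)" using Omega_D_finite even_domain_finite D by auto
  have pos: "0 < weight_D a b c z D g" if "0 < z" for z g
    using abc that by (intro weight_D_pos) auto
  have "weighted_prob (Omega_D D) (weight_D a b c x D) A
      \<le> weighted_prob (Omega_D D) (weight_D a b c y D) A"
  proof (rule holley_weighted_prob[OF fin(2,1)])
    show "g u = g' u" if "g \<in> Omega_D D" "g' \<in> Omega_D D" "u \<notin> D" for g g' u
      using that by (simp add: Omega_D_outside)
    show "g' \<in> A" if "g \<in> A" "g \<le> g'" for g g' using increasing_eventD[OF A that] .
    show "0 < sum (weight_D a b c x D) (Omega_D D)" "0 < sum (weight_D a b c y D) (Omega_D D)"
      using bc_0_in_Omega_D fin(2) pos xy by (auto intro!: sum_pos2 less_imp_le)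
  qed (use Omega_D_inf_sup pos xy weight_D_lattice_condition[OF D abc xy]
       in \<open>auto intro: less_imp_le\<close>)
  then show ?thesis unfolding prob_D_def weighted_prob_def .
qed

section \<open>The limits of vanishing and infinite boundary weight\<close>

lemma Omega_R_outside: "g \<in> Omega_R t D \<Longrightarrow> u \<notin> D \<Longrightarrow> g u = t u"
  unfolding Omega_R_def by blast

lemma Omega_R_bdryV: "g \<in> Omega_R t D \<Longrightarrow> v \<in> bdryV D \<Longrightarrow> u \<in> faces_at v \<Longrightarrow> g u = t u"
  unfolding Omega_R_def by blast

lemma Omega_R_height_function: "g \<in> Omega_R t D \<Longrightarrow> height_function g"
  unfolding Omega_R_def by blast

lemma bc_ext_bdry: "even_domain D \<Longrightarrow> w \<in> ext_bdry D \<Longrightarrow> bc n w = (if even n then n else n + 1)"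
  unfolding even_domain_def bc_def by auto

lemma num_bdry_c_eq_0_iff: "finite D \<Longrightarrow> num_bdry_c D h = 0 \<longleftrightarrow> (\<forall>v\<in>bdryV D. \<not> type_c h v)"
  unfolding num_bdry_c_def using bdryV_finite by auto

lemma num_bdry_c_le: "finite D \<Longrightarrow> num_bdry_c D h \<le> card (bdryV D)"
  unfolding num_bdry_c_def using bdryV_finite by (intro card_mono) auto

lemma num_bdry_c_eq_card_iff:
  "finite D \<Longrightarrow> num_bdry_c D h = card (bdryV D) \<longleftrightarrow> (\<forall>v\<in>bdryV D. type_c h v)"
proof -
  assume "finite D"
  then have "num_bdry_c D h = card (bdryV D) \<longleftrightarrow> {v \<in> bdryV D. type_c h v} = bdryV D"
    unfolding num_bdry_c_def
    using bdryV_finite card_subset_eq[of "bdryV D" "{v \<in> bdryV D. type_c h v}"] by auto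
  then show ?thesis by blast
qed

lemma vweight_cong:
  "(\<And>f. f \<in> faces_at v \<Longrightarrow> h f = h' f) \<Longrightarrow> vweight a b c h v = vweight a b c h' v"
  unfolding vweight_def type_c_def type_a_def type_b_def faces_at_def SW_def SE_def NE_def NW_def
  by simp

lemma Omega_R_bc_0_eq:
  assumes D: "even_domain D"
  shows "Omega_R (bc 0) D = {h \<in> Omega_D D. \<forall>v\<in>bdryV D. type_c h v}"
proof (intro set_eqI iffI)
  fix h assume h: "h \<in> Omega_R (bc 0) D"
  then have hD: "h \<in> Omega_D D"
    unfolding Omega_D_def using Omega_R_height_function Omega_R_outside by blast
  have "type_c h v" if v: "v \<in> bdryV D" for v
  proof -
    obtain u where u: "faces_at v \<inter> D = {u}" using bdryV_obtain_face[OF v] .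
    then have "h u = bc 0 u" using Omega_R_bdryV[OF h v] by blast
    then show ?thesis using bdryV_face_height[OF D v u hD] by (simp add: bc_def split: if_splits)
  qed
  then show "h \<in> {h \<in> Omega_D D. \<forall>v\<in>bdryV D. type_c h v}" using hD by blast
next
  fix h assume "h \<in> {h \<in> Omega_D D. \<forall>v\<in>bdryV D. type_c h v}"
  then have hD: "h \<in> Omega_D D" and c: "\<And>v. v \<in> bdryV D \<Longrightarrow> type_c h v" by auto
  have "h u = bc 0 u" if v: "v \<in> bdryV D" and "u \<in> faces_at v" "u \<in> D" for u v
  proof -
    obtain u' where "faces_at v \<inter> D = {u'}" using bdryV_obtain_face[OF v] .
    then have u: "faces_at v \<inter> D = {u}" using \<open>u \<in> faces_at v\<close> \<open>u \<in> D\<close> by auto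
    show ?thesis using bdryV_face_height[OF D v u hD] c[OF v] by (simp add: bc_def)
  qed
  then show "h \<in> Omega_R (bc 0) D"
    unfolding Omega_R_def using hD Omega_D_outside Omega_D_height_function by blast
qed

lemma override_bc_0_mem_Omega_D:
  assumes D: "even_domain D" and g: "g \<in> Omega_R (bc (-1)) D"
  shows "override_on (bc 0) g D \<in> Omega_D D" and "\<forall>v\<in>bdryV D. \<not> type_c (override_on (bc 0) g D) v"
proof -
  have "height_function (override_on (bc 0) g D)"
    using Omega_R_height_function[OF g] height_function_bc Omega_R_outside[OF g] bc_ext_bdry[OF D]
    by (intro height_function_override_on) (auto simp: ext_bdry_def)
  then show h: "override_on (bc 0) g D \<in> Omega_D D" unfolding Omega_D_def override_on_def by simp
  show "\<forall>v\<in>bdryV D. \<not> type_c (override_on (bc 0) g D) v"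
  proof
    fix v assume v: "v \<in> bdryV D"
    obtain u where u: "faces_at v \<inter> D = {u}" using bdryV_obtain_face[OF v] .
    then have "g u = bc (-1) u" "u \<in> D" using Omega_R_bdryV[OF g v] by blast+
    then have "override_on (bc 0) g D u = -1"
      using bdryV_face_height(1)[OF D v u h] unfolding override_on_def bc_def by simp
    then show "\<not> type_c (override_on (bc 0) g D) v"
      using bdryV_face_height(2)[OF D v u h] by (simp split: if_splits)
  qed
qed

lemma override_bc_minus_1_mem_Omega_R:
  assumes D: "even_domain D" and h: "h \<in> Omega_D D" and nc: "\<forall>v\<in>bdryV D. \<not> type_c h v"
  shows "override_on (bc (-1)) h D \<in> Omega_R (bc (-1)) D"
proof -
  have "height_function (override_on (bc (-1)) h D)"
    using Omega_D_height_function[OF h] height_function_bc Omega_D_outside[OF h] bc_ext_bdry[OF D]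
    by (intro height_function_override_on) (auto simp: ext_bdry_def)
  moreover have "override_on (bc (-1)) h D u = bc (-1) u"
    if v: "v \<in> bdryV D" and "u \<in> faces_at v" "u \<in> D" for u v
  proof -
    obtain u' where "faces_at v \<inter> D = {u'}" using bdryV_obtain_face[OF v] .
    then have u: "faces_at v \<inter> D = {u}" using \<open>u \<in> faces_at v\<close> \<open>u \<in> D\<close> by auto
    show ?thesis
      using bdryV_face_height[OF D v u h] nc v \<open>u \<in> D\<close> unfolding override_on_def bc_def by auto
  qed
  ultimately show ?thesis unfolding Omega_R_def override_on_def by auto
qed

lemma bij_betw_override_bc_0:
  assumes "even_domain D"
  shows "bij_betw (\<lambda>g. override_on (bc 0) g D) (Omega_R (bc (-1)) D)
    {h \<in> Omega_D D. num_bdry_c D h = 0}"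
proof (rule bij_betw_byWitness[where f' = "\<lambda>h. override_on (bc (-1)) h D"])
  show "\<forall>g\<in>Omega_R (bc (-1)) D. override_on (bc (-1)) (override_on (bc 0) g D) D = g"
    using Omega_R_outside by (fastforce simp: override_on_def)
  show "\<forall>h\<in>{h \<in> Omega_D D. num_bdry_c D h = 0}.
      override_on (bc 0) (override_on (bc (-1)) h D) D = h"
    using Omega_D_outside by (fastforce simp: override_on_def)
  show "(\<lambda>g. override_on (bc 0) g D) ` Omega_R (bc (-1)) D \<subseteq> {h \<in> Omega_D D. num_bdry_c D h = 0}"
    using override_bc_0_mem_Omega_D[OF assms] num_bdry_c_eq_0_iff even_domain_finite[OF assms]
    by auto
  show "(\<lambda>h. override_on (bc (-1)) h D) ` {h \<in> Omega_D D. num_bdry_c D h = 0} \<subseteq> Omega_R (bc (-1)) D"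
    using override_bc_minus_1_mem_Omega_R[OF assms] num_bdry_c_eq_0_iff even_domain_finite[OF assms]
    by auto
qed

lemma weight_R_override_bc_0:
  assumes D: "even_domain D" and g: "g \<in> Omega_R (bc (-1)) D"
  shows "weight_R a b c D (override_on (bc 0) g D) = weight_R a b c D g"
  unfolding weight_R_def
proof (intro prod.cong refl vweight_cong)
  fix v f assume "v \<in> dom_vertices D - bdryV D" "f \<in> faces_at v"
  then have "f \<in> D \<or> f \<in> ext_bdry D" using faces_at_interior_vertex by blast
  then show "override_on (bc 0) g D f = g f"
  proof
    assume f: "f \<in> ext_bdry D"
    then have "f \<notin> D" by (simp add: ext_bdry_def)
    then show ?thesis using Omega_R_outside[OF g] bc_ext_bdry[OF D f] by (simp add: override_on_def)
  qed (simp add: override_on_def)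
qed

lemma prob_D_eq_weighted_prob:
  "finite D \<Longrightarrow> prob_D a b c x D A
    = weighted_prob (Omega_D D) (\<lambda>h. weight_R a b c D h * x ^ num_bdry_c D h) A"
  unfolding prob_D_def weighted_prob_def by (simp add: weight_D_eq_power)

lemma prob_D_tendsto_0:
  assumes D: "even_domain D" and abc: "0 < a" "0 < b" "0 < c"
  shows "((\<lambda>x. prob_D a b c x D A)
    \<longlongrightarrow> weighted_prob {h \<in> Omega_D D. num_bdry_c D h = 0} (weight_R a b c D) A) (at_right 0)"
proof -
  have fin: "finite D" "finite (Omega_D D)" using Omega_D_finite even_domain_finite D by auto
  have "bc (-1) \<in> Omega_R (bc (-1)) D" unfolding Omega_R_def using height_function_bc by simp
  then have "override_on (bc 0) (bc (-1)) D \<in> {h \<in> Omega_D D. num_bdry_c D h = 0}"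
    using bij_betw_override_bc_0[OF D] unfolding bij_betw_def by blast
  then have "(\<Sum>h\<in>{h \<in> Omega_D D. num_bdry_c D h = 0}. weight_R a b c D h) \<noteq> 0"
    using fin weight_R_pos[OF abc]
    by (intro sum_pos2[THEN less_imp_neq, symmetric]) (auto intro: less_imp_le)
  then show ?thesis
    unfolding prob_D_eq_weighted_prob[OF fin(1)] by (intro weighted_prob_power_tendsto_0 fin(2))
qed

lemma prob_D_tendsto_infinity:
  assumes D: "even_domain D" and abc: "0 < a" "0 < b" "0 < c"
  shows "((\<lambda>x. prob_D a b c x D A) \<longlongrightarrow> HF_R a b c (bc 0) D A) at_top"
proof -
  have fin: "finite D" "finite (Omega_D D)" using Omega_D_finite even_domain_finite D by auto
  have R: "{h \<in> Omega_D D. num_bdry_c D h = card (bdryV D)} = Omega_R (bc 0) D"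
    using Omega_R_bc_0_eq[OF D] num_bdry_c_eq_card_iff[OF fin(1)] by auto
  have "bc 0 \<in> Omega_R (bc 0) D" unfolding Omega_R_def using height_function_bc by simp
  then have "(\<Sum>h\<in>{h \<in> Omega_D D. num_bdry_c D h = card (bdryV D)}. weight_R a b c D h) \<noteq> 0"
    unfolding R using fin R weight_R_pos[OF abc]
    by (intro sum_pos2[THEN less_imp_neq, symmetric]) (auto intro: less_imp_le finite_subset)
  from weighted_prob_power_tendsto_infinity[OF fin(2) num_bdry_c_le[OF fin(1)] this]
  show ?thesis unfolding prob_D_eq_weighted_prob[OF fin(1)] R HF_R_def weighted_prob_def .
qed

lemma HF_R_bc_minus_1_le:
  assumes D: "even_domain D" and abc: "0 < a" "0 < b" "0 < c" and A: "increasing_event A"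
  shows "HF_R a b c (bc (-1)) D A
    \<le> weighted_prob {h \<in> Omega_D D. num_bdry_c D h = 0} (weight_R a b c D) A"
proof -
  have "finite (Omega_D D)" using Omega_D_finite even_domain_finite D by auto
  have le: "g \<le> override_on (bc 0) g D" if "g \<in> Omega_R (bc (-1)) D" for g
    using Omega_R_outside[OF that] unfolding le_fun_def override_on_def bc_def by auto
  have "weighted_prob (Omega_R (bc (-1)) D) (weight_R a b c D) A
      \<le> weighted_prob {h \<in> Omega_D D. num_bdry_c D h = 0} (weight_R a b c D) A"
    using le increasing_eventD[OF A] weight_R_pos[OF abc] \<open>finite (Omega_D D)\<close>
    by (intro weighted_prob_le_of_bij_increasing[OF bij_betw_override_bc_0[OF D]]
        weight_R_override_bc_0[OF D]) (auto intro: less_imp_le)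
  then show ?thesis unfolding HF_R_def weighted_prob_def .
qed

lemma HF_D_mono:
  assumes D: "even_domain D" and abc: "0 < a" "0 < b" "max a b \<le> c" and A: "increasing_event A"
    and "0 \<le> z" "z \<le> z'"
  shows "HF_D a b c z D A \<le> HF_D a b c z' D A"
proof -
  have "0 < c" using abc by simp
  show ?thesis
    unfolding HF_D_def
    by (rule mono_extension_by_limits[OF _ prob_D_tendsto_0[OF D abc(1,2) \<open>0 < c\<close>]
          prob_D_tendsto_infinity[OF D abc(1,2) \<open>0 < c\<close>] \<open>0 \<le> z\<close> \<open>z \<le> z'\<close>])
      (rule prob_D_mono[OF D abc _ _ A])
qed

lemma HF_D_0:
  assumes "even_domain D" "0 < a" "0 < b" "0 < c"
  shows "HF_D a b c 0 D A = weighted_prob {h \<in> Omega_D D. num_bdry_c D h = 0} (weight_R a b c D) A"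
  unfolding HF_D_def using tendsto_Lim[OF _ prob_D_tendsto_0[OF assms]] by simp

lemma HF_D_infinity:
  assumes "even_domain D" "0 < a" "0 < b" "0 < c"
  shows "HF_D a b c \<infinity> D A = HF_R a b c (bc 0) D A"
  unfolding HF_D_def using tendsto_Lim[OF _ prob_D_tendsto_infinity[OF assms]] by simp

theorem proposition2p10:
  fixes D :: "face set" and a b c :: real and cb cb' :: ereal
  assumes "even_domain D"
    and "a > 0" and "b > 0" and "c \<ge> max a b"
    and "0 \<le> cb" and "cb \<le> cb'"
  shows "stoch_dom (HF_R a b c (bc (-1)) D) (HF_D a b c cb D)
       \<and> stoch_dom (HF_D a b c cb D) (HF_D a b c cb' D)
       \<and> stoch_dom (HF_D a b c cb' D) (HF_R a b c (bc 0) D)"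
proof -
  have "0 < c" using assms(2,4) by simp
  have "HF_R a b c (bc (-1)) D A \<le> HF_D a b c cb D A \<and> HF_D a b c cb D A \<le> HF_D a b c cb' D A
      \<and> HF_D a b c cb' D A \<le> HF_R a b c (bc 0) D A" if A: "increasing_event A" for A
  proof -
    note mono = HF_D_mono[OF assms(1-4) A]
    have "HF_R a b c (bc (-1)) D A \<le> HF_D a b c 0 D A"
      using HF_R_bc_minus_1_le[OF assms(1-3) \<open>0 < c\<close> A] HF_D_0[OF assms(1-3) \<open>0 < c\<close>] by simp
    also have "\<dots> \<le> HF_D a b c cb D A" using mono[OF order_refl assms(5)] .
    moreover have "HF_D a b c cb' D A \<le> HF_D a b c \<infinity> D A"
      using mono[OF order_trans[OF assms(5,6)]] by simp
    ultimately show ?thesis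
      using mono[OF assms(5,6)] HF_D_infinity[OF assms(1-3) \<open>0 < c\<close>] by simp
  qed
  then show ?thesis unfolding stoch_dom_def by blast
qed

end
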